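(* For every tree $T\subseteq\mathbb{N}^{<\mathbb{N}}$, the set $\mathcal{JT}(T)=\{J(\sigma):\sigma\in T\}$ is a tree and is computable in $T$.
   Context: A tree is a subset of $\mathbb{N}^{<\mathbb{N}}$ closed under initial segments. Finite strings of natural numbers are coded by natural numbers via a fixed computable coding in which $\sigma\subsetneq\tau$ implies code$(\sigma)<$ code$(\tau)$. For a finite string $\sigma$ and $\tau$, $\{n\}^{\tau}(n)\downarrow$ means the $n$-th Turing machine on input $n$ with oracle $\tau$ halts in fewer than $|\tau|$ steps. Set $t_{-1}=1$ and $t_n=\max\{t_{n-1}+1,\ \mu t(\{n\}^{\sigma\restriction t}(n)\downarrow)\}$ (with $t_n=t_{n-1}+1$ if no such $t$), where $\sigma\restriction t$ is the initial segment of length $\min(t,|\sigma|)$; the Jump function is $J(\sigma)=\langle\sigma\restriction t_0,\dots,\sigma\restriction t_{k-1}\rangle$, where $k$ is least with $t_k>|\sigma|$. *)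

theory Defs
  imports "HOL-Library.Nat_Bijection" "HOL-Library.Sublist"
begin

text \<open>Coding: code [] = 0 and
  code (s @ [x]) = Suc (prod_encode (x, code s)); this is a computable bijection
  with s a proper prefix of t implies code s < code t.\<close>

definition scode :: "nat list \<Rightarrow> nat" where
  "scode s = list_encode (rev s)"

definition is_tree :: "'a list set \<Rightarrow> bool" where
  "is_tree A \<longleftrightarrow> (\<forall>\<tau>\<in>A. \<forall>\<rho>. prefix \<rho> \<tau> \<longrightarrow> \<rho> \<in> A)"

datatype instr =
    Inc nat nat
  | Dec nat nat nat
  | Orc nat nat

type_synonym prog = "instr list"
type_synonym orcl = "nat \<Rightarrow> nat option"
type_synonym config = "nat \<times> (nat \<Rightarrow> nat)"

definition step :: "prog \<Rightarrow> orcl \<Rightarrow> config \<Rightarrow> config option" where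
  "step p Q c = (case c of (pc, R) \<Rightarrow>
     if length p \<le> pc then Some (pc, R) else
     (case p ! pc of
        Inc r j \<Rightarrow> Some (j, R(r := Suc (R r)))
      | Dec r j k \<Rightarrow> (if R r = 0 then Some (k, R) else Some (j, R(r := R r - 1)))
      | Orc r j \<Rightarrow> (case Q (R r) of None \<Rightarrow> None | Some v \<Rightarrow> Some (j, R(r := v)))))"

fun run :: "prog \<Rightarrow> orcl \<Rightarrow> nat \<Rightarrow> config \<Rightarrow> config option" where
  "run p Q 0 c = Some c"
| "run p Q (Suc s) c = (case run p Q s c of None \<Rightarrow> None | Some c' \<Rightarrow> step p Q c')"

definition init :: "nat \<Rightarrow> nat \<Rightarrow> nat" where
  "init x = (\<lambda>r. if r = 0 then x else 0)"

definition halted_at :: "prog \<Rightarrow> orcl \<Rightarrow> nat \<Rightarrow> nat \<Rightarrow> bool" where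
  "halted_at p Q x s = (case run p Q s (0, init x) of None \<Rightarrow> False
                          | Some (pc, R) \<Rightarrow> length p \<le> pc)"

definition decode_instr :: "nat \<Rightarrow> instr" where
  "decode_instr c = (let b = c div 3 in
     if c mod 3 = 0 then Inc (fst (prod_decode b)) (snd (prod_decode b))
     else if c mod 3 = 1 then
       Dec (fst (prod_decode b)) (fst (prod_decode (snd (prod_decode b))))
           (snd (prod_decode (snd (prod_decode b))))
     else Orc (fst (prod_decode b)) (snd (prod_decode b)))"

definition machine :: "nat \<Rightarrow> prog" where
  "machine e = map decode_instr (list_decode e)"

definition str_orc :: "nat list \<Rightarrow> orcl" where
  "str_orc \<tau> = (\<lambda>i. if i < length \<tau> then Some (\<tau> ! i) else None)"

definition conv :: "nat \<Rightarrow> nat list \<Rightarrow> bool" where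
  "conv n \<tau> \<longleftrightarrow> (\<exists>s < length \<tau>. halted_at (machine n) (str_orc \<tau>) n s)"

definition tnext :: "nat list \<Rightarrow> nat \<Rightarrow> nat \<Rightarrow> nat" where
  "tnext \<sigma> n prev = (if \<exists>t. conv n (take t \<sigma>)
                       then max (prev + 1) (LEAST t. conv n (take t \<sigma>))
                       else prev + 1)"

text \<open>jt \<sigma> n = t_n, with t_{-1} = 1.\<close>
fun jt :: "nat list \<Rightarrow> nat \<Rightarrow> nat" where
  "jt \<sigma> 0 = tnext \<sigma> 0 1"
| "jt \<sigma> (Suc n) = tnext \<sigma> (Suc n) (jt \<sigma> n)"

definition Jk :: "nat list \<Rightarrow> nat" where
  "Jk \<sigma> = (LEAST k. length \<sigma> < jt \<sigma> k)"

definition Jump :: "nat list \<Rightarrow> nat list" where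
  "Jump \<sigma> = map (\<lambda>i. scode (take (jt \<sigma> i) \<sigma>)) [0..<Jk \<sigma>]"

definition JT :: "nat list set \<Rightarrow> nat list set" where
  "JT T = Jump ` T"

definition char_orc :: "nat set \<Rightarrow> orcl" where
  "char_orc X = (\<lambda>i. Some (if i \<in> X then 1 else 0))"

definition computable_in :: "nat set \<Rightarrow> nat set \<Rightarrow> bool" where
  "computable_in A X \<longleftrightarrow> (\<exists>p. \<forall>x. \<exists>s pc R.
      run p (char_orc X) s (0, init x) = Some (pc, R) \<and> length p \<le> pc \<and>
      R 0 = (if x \<in> A then 1 else 0))"

end

theory Submission
  imports Defs
begin

text \<open>
  The entries \<open>t\<^sub>0 < \<dots> < t\<^sub>i\<close> of the jump of \<open>\<sigma>\<close> depend only on \<open>\<sigma> \<restriction> t\<^sub>i\<close>, so the first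
  \<open>i + 1\<close> entries of \<open>J(\<sigma>)\<close> form \<open>J(\<sigma> \<restriction> t\<^sub>i)\<close>; hence \<open>\<J>\<T>(T)\<close> is closed under prefixes.
  In particular a nonempty \<open>\<rho> = J(\<sigma>)\<close> ends with the code of \<open>\<tau> = \<sigma> \<restriction> t\<^sub>k\<^sub>-\<^sub>1 \<in> T\<close>, and
  \<open>J(\<tau>) = \<rho>\<close>. So \<open>\<rho> \<in> \<J>\<T>(T)\<close> iff its last entry codes some \<open>\<tau> \<in> T\<close> with \<open>J(\<tau>) = \<rho>\<close>:
  one oracle query plus a computation of \<open>J\<close>. The jump is computable because each \<open>t\<^sub>n\<close>
  is found by a search bounded by \<open>|\<sigma>|\<close>, each step of which simulates a machine for fewer
  than \<open>|\<sigma>|\<close> steps.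

  Computability is established for programs of a structured while language, which compile
  to the register machines, and is closed under composition, iteration and bounded search.
\<close>

section \<open>A structured while language and its compilation\<close>

datatype cmd = Skip | CInc nat | COrc nat | Seq cmd cmd | IfDec nat cmd cmd | While nat cmd

text \<open>As with \<open>Dec\<close>, the nonzero branch of \<open>IfDec r\<close> and every iteration of \<open>While r\<close>
  first decrement register \<open>r\<close>.\<close>

inductive exec :: "orcl \<Rightarrow> cmd \<Rightarrow> (nat \<Rightarrow> nat) \<Rightarrow> (nat \<Rightarrow> nat) \<Rightarrow> bool" for Q where
  exec_Skip: "exec Q Skip R R"
| exec_CInc: "exec Q (CInc r) R (R(r := Suc (R r)))"
| exec_COrc: "Q (R r) = Some v \<Longrightarrow> exec Q (COrc r) R (R(r := v))"
| exec_Seq: "exec Q c1 R R1 \<Longrightarrow> exec Q c2 R1 R2 \<Longrightarrow> exec Q (Seq c1 c2) R R2"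
| exec_IfDec_zero: "R r = 0 \<Longrightarrow> exec Q c1 R R' \<Longrightarrow> exec Q (IfDec r c1 c2) R R'"
| exec_IfDec_pos: "R r \<noteq> 0 \<Longrightarrow> exec Q c2 (R(r := R r - 1)) R' \<Longrightarrow> exec Q (IfDec r c1 c2) R R'"
| exec_While_zero: "R r = 0 \<Longrightarrow> exec Q (While r c) R R"
| exec_While_pos: "R r \<noteq> 0 \<Longrightarrow> exec Q c (R(r := R r - 1)) R1 \<Longrightarrow> exec Q (While r c) R1 R2 \<Longrightarrow>
    exec Q (While r c) R R2"

fun csize :: "cmd \<Rightarrow> nat" where
  "csize Skip = 0"
| "csize (CInc r) = 1"
| "csize (COrc r) = 1"
| "csize (Seq c1 c2) = csize c1 + csize c2"
| "csize (IfDec r c1 c2) = csize c1 + csize c2 + 3"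
| "csize (While r c) = csize c + 3"

definition goto :: "nat \<Rightarrow> nat \<Rightarrow> instr list" where
  "goto a t = [Inc 0 (Suc a), Dec 0 t t]"

text \<open>\<open>compile c a\<close> is the code of \<open>c\<close> for the addresses from \<open>a\<close> on (jump targets are
  absolute); \<open>goto a t\<close> placed at address \<open>a\<close> jumps to \<open>t\<close>.\<close>

fun compile :: "cmd \<Rightarrow> nat \<Rightarrow> instr list" where
  "compile Skip a = []"
| "compile (CInc r) a = [Inc r (Suc a)]"
| "compile (COrc r) a = [Orc r (Suc a)]"
| "compile (Seq c1 c2) a = compile c1 a @ compile c2 (a + csize c1)"
| "compile (IfDec r c1 c2) a = [Dec r (Suc a) (a + 3 + csize c2)] @ compile c2 (Suc a)
     @ goto (Suc a + csize c2) (a + 3 + csize c2 + csize c1) @ compile c1 (a + 3 + csize c2)"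
| "compile (While r c) a =
     [Dec r (Suc a) (a + 3 + csize c)] @ compile c (Suc a) @ goto (Suc a + csize c) a"

lemma length_compile [simp]: "length (compile c a) = csize c"
  by (induction c arbitrary: a) (auto simp: goto_def)

definition code_at :: "prog \<Rightarrow> nat \<Rightarrow> instr list \<Rightarrow> bool" where
  "code_at p a q \<longleftrightarrow> a + length q \<le> length p \<and> (\<forall>i<length q. p ! (a + i) = q ! i)"

lemma code_at_Nil [simp]: "code_at p a [] \<longleftrightarrow> a \<le> length p"
  by (simp add: code_at_def)

lemma code_at_Cons [simp]: "code_at p a (x # q) \<longleftrightarrow> a < length p \<and> p ! a = x \<and> code_at p (Suc a) q"
  unfolding code_at_def by (auto simp: nth_Cons split: nat.splits)

lemma code_at_append [simp]:
  "code_at p a (q1 @ q2) \<longleftrightarrow> code_at p a q1 \<and> code_at p (a + length q1) q2"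
proof (induction q1 arbitrary: a)
  case Nil
  then show ?case by (auto simp: code_at_def)
qed auto

definition reaches :: "prog \<Rightarrow> orcl \<Rightarrow> config \<Rightarrow> config \<Rightarrow> bool" where
  "reaches p Q c c' \<longleftrightarrow> (\<exists>s. run p Q s c = Some c')"

lemma run_add: "run p Q (s1 + s2) c = Option.bind (run p Q s1 c) (run p Q s2)"
proof (induction s2)
  case 0
  then show ?case by (cases "run p Q s1 c") auto
next
  case (Suc s2)
  then show ?case by (cases "run p Q s1 c") (auto split: option.splits)
qed

lemma reaches_refl: "reaches p Q c c"
  unfolding reaches_def by (metis run.simps(1))

lemma reaches_trans: "reaches p Q c c1 \<Longrightarrow> reaches p Q c1 c2 \<Longrightarrow> reaches p Q c c2"
  unfolding reaches_def by (metis bind.simps(2) run_add)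

lemma reaches_step: "step p Q c = Some c' \<Longrightarrow> reaches p Q c c'"
  unfolding reaches_def by (metis option.simps(5) run.simps)

lemma reaches_goto: "code_at p a (goto a t) \<Longrightarrow> reaches p Q (a, R) (t, R)"
  by (rule reaches_trans[OF reaches_step reaches_step]) (auto simp: goto_def step_def)

lemma compile_correct:
  assumes "exec Q c R R'" and "code_at p a (compile c a)"
  shows "reaches p Q (a, R) (a + csize c, R')"
  using assms
proof (induction arbitrary: a rule: exec.induct)
  case (exec_Skip R)
  then show ?case by (simp add: reaches_refl)
next
  case (exec_CInc R r)
  then show ?case by (auto intro!: reaches_step simp: step_def fun_upd_def)
next
  case (exec_COrc R r v)
  then show ?case by (auto intro!: reaches_step simp: step_def fun_upd_def)
next
  case (exec_Seq c1 R R1 c2 R2)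
  then have "reaches p Q (a, R) (a + csize c1, R1)"
    and "reaches p Q (a + csize c1, R1) (a + csize c1 + csize c2, R2)" by simp_all
  then show ?case by (simp add: add.assoc reaches_trans)
next
  case (exec_IfDec_zero R r c1 R' c2)
  then have "reaches p Q (a, R) (a + 3 + csize c2, R)"
    by (auto intro!: reaches_step simp: step_def)
  moreover have "reaches p Q (a + 3 + csize c2, R) (a + 3 + csize c2 + csize c1, R')"
    using exec_IfDec_zero.prems by (intro exec_IfDec_zero.IH) (simp add: goto_def eval_nat_numeral)
  ultimately show ?case by (simp add: add_ac reaches_trans)
next
  case (exec_IfDec_pos R r c2 R' c1)
  then have "reaches p Q (a, R) (Suc a, R(r := R r - 1))"
    by (auto intro!: reaches_step simp: step_def)
  moreover have "reaches p Q (Suc a, R(r := R r - 1)) (Suc a + csize c2, R')"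
    using exec_IfDec_pos.prems by (intro exec_IfDec_pos.IH) simp
  moreover have "reaches p Q (Suc a + csize c2, R') (a + csize (IfDec r c1 c2), R')"
    using exec_IfDec_pos.prems reaches_goto[of p "Suc a + csize c2"] by (auto simp: add_ac)
  ultimately show ?case by (blast intro: reaches_trans)
next
  case (exec_While_zero R r c)
  then show ?case by (auto intro!: reaches_step simp: step_def add_ac)
next
  case (exec_While_pos R r c R1 R2)
  then have "reaches p Q (a, R) (Suc a, R(r := R r - 1))"
    by (auto intro!: reaches_step simp: step_def)
  moreover have "reaches p Q (Suc a, R(r := R r - 1)) (Suc a + csize c, R1)"
    using exec_While_pos.prems by (intro exec_While_pos.IH) simp
  moreover have "reaches p Q (Suc a + csize c, R1) (a, R1)"
    using exec_While_pos.prems reaches_goto[of p "Suc a + csize c"] by auto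
  ultimately show ?case using exec_While_pos.IH(2)[OF exec_While_pos.prems] by (blast intro: reaches_trans)
qed

lemma reaches_compile: "exec Q c R R' \<Longrightarrow> reaches (compile c 0) Q (0, R) (csize c, R')"
  using compile_correct[of Q c R R' "compile c 0" 0] by (simp add: code_at_def)


section \<open>Basic while programs\<close>

fun reg_bound :: "cmd \<Rightarrow> nat" where
  "reg_bound Skip = 0"
| "reg_bound (CInc r) = Suc r"
| "reg_bound (COrc r) = Suc r"
| "reg_bound (Seq c1 c2) = max (reg_bound c1) (reg_bound c2)"
| "reg_bound (IfDec r c1 c2) = max (Suc r) (max (reg_bound c1) (reg_bound c2))"
| "reg_bound (While r c) = max (Suc r) (reg_bound c)"

lemma exec_frame: "exec Q c R R' \<Longrightarrow> reg_bound c \<le> x \<Longrightarrow> R' x = R x"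
  by (induction rule: exec.induct) auto

lemma exec_While_invariant:
  assumes body: "\<And>R. I R \<Longrightarrow> R r \<noteq> 0 \<Longrightarrow> \<exists>R1. exec Q c (R(r := R r - 1)) R1 \<and> I R1 \<and> R1 r < R r"
    and exit: "\<And>R. I R \<Longrightarrow> R r = 0 \<Longrightarrow> P R"
    and "I R"
  shows "\<exists>R'. exec Q (While r c) R R' \<and> P R'"
  using \<open>I R\<close>
proof (induction "R r" arbitrary: R rule: less_induct)
  case less
  show ?case
  proof (cases "R r = 0")
    case True
    then show ?thesis using exit[OF less.prems] exec_While_zero by blast
  next
    case False
    then obtain R1 where R1: "exec Q c (R(r := R r - 1)) R1" "I R1" "R1 r < R r"
      using body[OF less.prems] by blast
    from less.hyps[OF R1(3) R1(2)] obtain R' where "exec Q (While r c) R1 R'" "P R'" by blast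
    then show ?thesis using exec_While_pos[OF False R1(1)] by blast
  qed
qed

fun seqs :: "cmd list \<Rightarrow> cmd" where
  "seqs [] = Skip"
| "seqs (c # cs) = Seq c (seqs cs)"

lemma exec_seqs_Nil: "exec Q (seqs []) R R"
  by (simp add: exec_Skip)

lemma exec_seqs_Cons: "exec Q c R R1 \<Longrightarrow> exec Q (seqs cs) R1 R2 \<Longrightarrow> exec Q (seqs (c # cs)) R R2"
  by (simp add: exec_Seq)

definition clear :: "nat \<Rightarrow> cmd" where
  "clear r = While r Skip"

lemma exec_clear: "exec Q (clear r) R (R(r := 0))"
proof -
  have "\<exists>R'. exec Q (While r Skip) R R' \<and> R' = R(r := 0)"
    by (rule exec_While_invariant[where I="\<lambda>R'. \<forall>x. x \<noteq> r \<longrightarrow> R' x = R x"])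
       (auto intro!: exec_Skip)
  then show ?thesis by (auto simp: clear_def)
qed

definition move :: "nat \<Rightarrow> nat \<Rightarrow> cmd" where
  "move a b = While a (CInc b)"

lemma exec_move: "a \<noteq> b \<Longrightarrow> exec Q (move a b) R (R(a := 0, b := R b + R a))"
proof -
  assume "a \<noteq> b"
  then have "\<exists>R'. exec Q (While a (CInc b)) R R' \<and> R' = R(a := 0, b := R b + R a)"
    by (intro exec_While_invariant[where I="\<lambda>R'. R' b + R' a = R b + R a \<and>
          (\<forall>x. x \<noteq> a \<longrightarrow> x \<noteq> b \<longrightarrow> R' x = R x)"])
       (auto intro!: exec_CInc exI)
  then show ?thesis by (auto simp: move_def)
qed

definition move2 :: "nat \<Rightarrow> nat \<Rightarrow> nat \<Rightarrow> cmd" where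
  "move2 a b d = While a (Seq (CInc b) (CInc d))"

lemma exec_move2:
  "distinct [a, b, d] \<Longrightarrow> exec Q (move2 a b d) R (R(a := 0, b := R b + R a, d := R d + R a))"
proof -
  assume "distinct [a, b, d]"
  then have "\<exists>R'. exec Q (While a (Seq (CInc b) (CInc d))) R R' \<and>
      R' = R(a := 0, b := R b + R a, d := R d + R a)"
    by (intro exec_While_invariant[where I="\<lambda>R'. R' b + R' a = R b + R a \<and>
          R' d + R' a = R d + R a \<and> (\<forall>x. x \<noteq> a \<longrightarrow> x \<noteq> b \<longrightarrow> x \<noteq> d \<longrightarrow> R' x = R x)"])
       (auto intro!: exec_CInc exec_Seq exI)
  then show ?thesis by (auto simp: move2_def)
qed

definition add_to :: "nat \<Rightarrow> nat \<Rightarrow> nat \<Rightarrow> cmd" where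
  "add_to a b tmp = seqs [clear tmp, move2 a b tmp, move tmp a]"

lemma exec_add_to:
  assumes "distinct [a, b, tmp]"
  shows "exec Q (add_to a b tmp) R (R(b := R b + R a, tmp := 0))"
proof -
  let ?R1 = "R(tmp := 0)"
  let ?R2 = "?R1(a := 0, b := ?R1 b + ?R1 a, tmp := ?R1 tmp + ?R1 a)"
  have "exec Q (add_to a b tmp) R (?R2(tmp := 0, a := ?R2 a + ?R2 tmp))"
    unfolding add_to_def using assms
    by (intro exec_seqs_Cons[OF exec_clear] exec_seqs_Cons[OF exec_move2]
        exec_seqs_Cons[OF exec_move] exec_seqs_Nil) auto
  also have "?R2(tmp := 0, a := ?R2 a + ?R2 tmp) = R(b := R b + R a, tmp := 0)"
    using assms by (auto simp: fun_eq_iff)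
  finally show ?thesis .
qed

definition copy :: "nat \<Rightarrow> nat \<Rightarrow> nat \<Rightarrow> cmd" where
  "copy a b tmp = Seq (clear b) (add_to a b tmp)"

lemma exec_copy:
  assumes "distinct [a, b, tmp]"
  shows "exec Q (copy a b tmp) R (R(b := R a, tmp := 0))"
proof -
  have "exec Q (copy a b tmp) R ((R(b := 0))(b := 0 + R a, tmp := 0))"
    unfolding copy_def using exec_add_to[OF assms, of Q "R(b := 0)"] assms
    by (intro exec_Seq[OF exec_clear]) simp
  then show ?thesis by simp
qed


section \<open>Programs for the Cantor pairing\<close>

lemma prod_decode_0 [simp]: "prod_decode 0 = (0, 0)"
proof -
  have "prod_encode (0, 0) = 0" by (simp add: prod_encode_def)
  then show ?thesis by (metis prod_encode_inverse)
qed

lemma prod_decode_Suc: "prod_decode (Suc j) =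
   (case prod_decode j of (m, n) \<Rightarrow> if n = 0 then (0, Suc m) else (Suc m, n - 1))"
proof -
  obtain m n where mn: "prod_decode j = (m, n)" by fastforce
  then have j: "j = prod_encode (m, n)" by (metis prod_decode_inverse)
  show ?thesis
  proof (cases n)
    case 0
    then have "Suc j = prod_encode (0, Suc m)" using j by (simp add: prod_encode_def)
    then show ?thesis using mn 0 by simp
  next
    case (Suc k)
    then have "Suc j = prod_encode (Suc m, k)" using j by (simp add: prod_encode_def)
    then show ?thesis using mn Suc by simp
  qed
qed

definition unpair_step :: cmd where
  "unpair_step = IfDec 2 (Seq (move 1 2) (CInc 2)) (CInc 1)"

lemma exec_unpair_step:
  "\<exists>R'. exec Q unpair_step R R' \<and> (R' 1, R' 2) = prod_decode (Suc (prod_encode (R 1, R 2))) \<and>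
     R' 0 = R 0"
proof (cases "R 2 = 0")
  case True
  let ?T = "R(1 := 0, 2 := R 2 + R 1)"
  have E: "exec Q unpair_step R (?T(2 := Suc (?T 2)))"
    unfolding unpair_step_def using True by (intro exec_IfDec_zero exec_Seq[OF exec_move exec_CInc]) auto
  show ?thesis by (intro exI[of _ "?T(2 := Suc (?T 2))"] conjI E) (simp_all add: True prod_decode_Suc)
next
  case False
  let ?T = "R(2 := R 2 - 1)"
  have E: "exec Q unpair_step R (?T(1 := Suc (?T 1)))"
    unfolding unpair_step_def using False by (intro exec_IfDec_pos exec_CInc) auto
  show ?thesis by (intro exI[of _ "?T(1 := Suc (?T 1))"] conjI E) (simp_all add: False prod_decode_Suc)
qed

text \<open>\<open>unpair_cmd\<close> walks along the enumeration of pairs, counting register 0 down to zero.\<close>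

definition unpair_cmd :: cmd where
  "unpair_cmd = seqs [clear 1, clear 2, While 0 unpair_step, move 2 0]"

lemma exec_unpair_cmd:
  "\<exists>R'. exec Q unpair_cmd R R' \<and> R' 0 = snd (prod_decode (R 0)) \<and> R' 1 = fst (prod_decode (R 0))"
proof -
  let ?x = "R 0"
  have "\<exists>R'. exec Q (While 0 unpair_step) (R(1 := 0, 2 := 0)) R' \<and>
      (R' 1, R' 2) = prod_decode ?x \<and> R' 0 = 0"
  proof (rule exec_While_invariant[where I="\<lambda>S. S 0 \<le> ?x \<and> (S 1, S 2) = prod_decode (?x - S 0)"])
    fix S :: "nat \<Rightarrow> nat"
    assume I: "S 0 \<le> ?x \<and> (S 1, S 2) = prod_decode (?x - S 0)" and nz: "S 0 \<noteq> 0"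
    then have "prod_encode (S 1, S 2) = ?x - S 0" by (metis prod_decode_inverse)
    then have enc: "Suc (prod_encode (S 1, S 2)) = ?x - (S 0 - 1)" using I nz by simp arith
    obtain S' where "exec Q unpair_step (S(0 := S 0 - 1)) S'"
      "(S' 1, S' 2) = prod_decode (?x - (S 0 - 1))" "S' 0 = S 0 - 1"
      using exec_unpair_step[of Q "S(0 := S 0 - 1)"] unfolding enc[symmetric] by auto
    then show "\<exists>S'. exec Q unpair_step (S(0 := S 0 - 1)) S' \<and>
        (S' 0 \<le> ?x \<and> (S' 1, S' 2) = prod_decode (?x - S' 0)) \<and> S' 0 < S 0"
      using I nz by (intro exI[of _ S']) auto
  qed simp_all
  then obtain S where S: "exec Q (While 0 unpair_step) (R(1 := 0, 2 := 0)) S"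
    "(S 1, S 2) = prod_decode ?x" "S 0 = 0" by blast
  have "exec Q unpair_cmd R (S(2 := 0, 0 := S 0 + S 2))"
    unfolding unpair_cmd_def
    by (intro exec_seqs_Cons[OF exec_clear] exec_seqs_Cons[OF exec_clear]
        exec_seqs_Cons[OF S(1)] exec_seqs_Cons[OF exec_move] exec_seqs_Nil) simp
  then show ?thesis using S(2,3) by (intro exI) (auto simp: prod_eq_iff)
qed

text \<open>\<open>pair_cmd\<close> computes \<open>prod_encode (m, n) = triangle (m + n) + m\<close>, accumulating the
  triangular number by adding \<open>k + 1\<close> while a counter runs from \<open>m + n\<close> down to \<open>0\<close>.\<close>

definition pair_cmd :: cmd where
  "pair_cmd = seqs [copy 1 2 4, copy 1 3 4, move 0 3, While 3 (Seq (add_to 3 0 4) (CInc 0)), move 2 0]"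

lemma exec_pair_cmd: "\<exists>R'. exec Q pair_cmd R R' \<and> R' 0 = prod_encode (R 1, R 0)"
proof -
  let ?m = "R 1" and ?n = "R 0"
  let ?S0 = "R(2 := ?m, 4 := 0)"
  let ?S1 = "?S0(3 := ?S0 1, 4 := 0)"
  let ?S2 = "?S1(0 := 0, 3 := ?S1 3 + ?S1 0)"
  have "\<exists>S. exec Q (While 3 (Seq (add_to 3 0 4) (CInc 0))) ?S2 S \<and> S 0 = triangle (?m + ?n) \<and> S 2 = ?m"
  proof (rule exec_While_invariant[where I="\<lambda>S. S 0 + triangle (S 3) = triangle (?m + ?n) \<and> S 2 = ?m"])
    fix S :: "nat \<Rightarrow> nat"
    assume I: "S 0 + triangle (S 3) = triangle (?m + ?n) \<and> S 2 = ?m" and nz: "S 3 \<noteq> 0"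
    let ?S = "S(3 := S 3 - 1)"
    let ?T = "?S(0 := ?S 0 + ?S 3, 4 := 0)"
    have "exec Q (Seq (add_to 3 0 4) (CInc 0)) ?S (?T(0 := Suc (?T 0)))"
      by (intro exec_Seq[OF exec_add_to exec_CInc]) simp
    moreover obtain k where "S 3 = Suc k" using nz by (cases "S 3") auto
    ultimately show "\<exists>S'. exec Q (Seq (add_to 3 0 4) (CInc 0)) ?S S' \<and>
        (S' 0 + triangle (S' 3) = triangle (?m + ?n) \<and> S' 2 = ?m) \<and> S' 3 < S 3"
      using I by (intro exI) auto
  qed simp_all
  then obtain S where S: "exec Q (While 3 (Seq (add_to 3 0 4) (CInc 0))) ?S2 S"
    "S 0 = triangle (?m + ?n)" "S 2 = ?m" by blast
  have "exec Q pair_cmd R (S(2 := 0, 0 := S 0 + S 2))"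
    unfolding pair_cmd_def
    by (intro exec_seqs_Cons[OF exec_copy] exec_seqs_Cons[OF exec_copy]
        exec_seqs_Cons[OF exec_move] exec_seqs_Cons[OF S(1)] exec_seqs_Cons[OF exec_move]
        exec_seqs_Nil) simp_all
  then show ?thesis using S(2,3) unfolding prod_encode_def by fastforce
qed


section \<open>Computable functions\<close>

text \<open>The program must work from arbitrary initial registers, which makes composition immediate.\<close>

definition computable :: "orcl \<Rightarrow> (nat \<Rightarrow> nat) \<Rightarrow> bool" where
  "computable Q f \<longleftrightarrow> (\<exists>c. \<forall>R. \<exists>R'. exec Q c R R' \<and> R' 0 = f (R 0))"

named_theorems computable_intros

lemma computable_id [computable_intros]: "computable Q (\<lambda>x. x)"
  unfolding computable_def by (auto intro!: exI[of _ Skip] exec_Skip)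

lemma computable_Suc: "computable Q Suc"
  unfolding computable_def by (auto intro!: exI[of _ "CInc 0"] exI exec_CInc)

lemma computable_zero: "computable Q (\<lambda>x. 0)"
  unfolding computable_def by (auto intro!: exI[of _ "clear 0"] exI exec_clear)

lemma computable_comp: "computable Q f \<Longrightarrow> computable Q g \<Longrightarrow> computable Q (\<lambda>x. f (g x))"
  unfolding computable_def by (metis exec_Seq)

lemma computable_oracle: "(\<And>x. Q x \<noteq> None) \<Longrightarrow> computable Q (\<lambda>x. the (Q x))"
  unfolding computable_def by (metis exec_COrc fun_upd_same option.exhaust_sel)

lemma computable_snd_prod_decode: "computable Q (\<lambda>x. snd (prod_decode x))"
  unfolding computable_def using exec_unpair_cmd by blast

lemma computable_fst_prod_decode: "computable Q (\<lambda>x. fst (prod_decode x))"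
proof -
  have "\<exists>R'. exec Q (Seq unpair_cmd (copy 1 0 2)) R R' \<and> R' 0 = fst (prod_decode (R 0))" for R
  proof -
    obtain S where "exec Q unpair_cmd R S" "S 1 = fst (prod_decode (R 0))"
      using exec_unpair_cmd by blast
    moreover have "exec Q (copy 1 0 2) S (S(0 := S 1, 2 := 0))" by (rule exec_copy) simp
    ultimately show ?thesis by (intro exI[of _ "S(0 := S 1, 2 := 0)"]) (auto intro: exec_Seq)
  qed
  then show ?thesis unfolding computable_def by blast
qed

lemma computable_prod_encode:
  assumes "computable Q f" and "computable Q g"
  shows "computable Q (\<lambda>x. prod_encode (f x, g x))"
proof -
  obtain cf cg where cf: "\<And>R. \<exists>R'. exec Q cf R R' \<and> R' 0 = f (R 0)"
    and cg: "\<And>R. \<exists>R'. exec Q cg R R' \<and> R' 0 = g (R 0)"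
    using assms unfolding computable_def by metis
  text \<open>Register \<open>B\<close> saves the input and \<open>C\<close> the value of \<open>f\<close>, out of reach of \<open>cf\<close> and \<open>cg\<close>;
    \<open>D\<close> is scratch.\<close>
  define B where "B = max (max (reg_bound cf) (reg_bound cg)) 2"
  define C where "C = Suc B"
  define D where "D = Suc C"
  have B: "2 \<le> B" "reg_bound cf \<le> B" "reg_bound cg \<le> C" "B < C" "C < D"
    unfolding B_def C_def D_def by auto
  have "\<exists>R'. exec Q (seqs [copy 0 B D, cf, copy 0 C D, copy B 0 D, cg, copy C 1 D, pair_cmd]) R R' \<and>
      R' 0 = prod_encode (f (R 0), g (R 0))" for R
  proof -
    let ?x = "R 0"
    let ?S1 = "R(B := R 0, D := 0)"
    obtain S2 where S2: "exec Q cf ?S1 S2" "S2 0 = f ?x" using cf[of ?S1] B by auto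
    have S2B: "S2 B = ?x" using exec_frame[OF S2(1) B(2)] B by simp
    let ?S3 = "S2(C := S2 0, D := 0)"
    let ?S4 = "?S3(0 := ?S3 B, D := 0)"
    obtain S5 where S5: "exec Q cg ?S4 S5" "S5 0 = g ?x" using cg[of ?S4] B S2B by auto
    have S5C: "S5 C = f ?x" using exec_frame[OF S5(1) B(3)] B S2(2) by simp
    let ?S6 = "S5(1 := S5 C, D := 0)"
    obtain S7 where S7: "exec Q pair_cmd ?S6 S7" "S7 0 = prod_encode (?S6 1, ?S6 0)"
      using exec_pair_cmd by blast
    have "exec Q (seqs [copy 0 B D, cf, copy 0 C D, copy B 0 D, cg, copy C 1 D, pair_cmd]) R S7"
      using B by (intro exec_seqs_Cons[OF exec_copy] exec_seqs_Cons[OF S2(1)] exec_seqs_Cons[OF exec_copy]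
          exec_seqs_Cons[OF exec_copy] exec_seqs_Cons[OF S5(1)] exec_seqs_Cons[OF exec_copy]
          exec_seqs_Cons[OF S7(1)] exec_seqs_Nil) simp_all
    then show ?thesis using S7(2) S5 S5C B by auto
  qed
  then show ?thesis unfolding computable_def by blast
qed

lemma computable_funpow_prod_decode:
  assumes "computable Q f"
  shows "computable Q (\<lambda>x. (f ^^ fst (prod_decode x)) (snd (prod_decode x)))"
proof -
  obtain cf where cf: "\<And>R. \<exists>R'. exec Q cf R R' \<and> R' 0 = f (R 0)"
    using assms unfolding computable_def by metis
  define B where "B = max (reg_bound cf) 3"
  have B: "reg_bound cf \<le> B" "2 < B" unfolding B_def by auto
  have "\<exists>R'. exec Q (seqs [unpair_cmd, clear B, move 1 B, While B cf]) R R' \<and>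
      R' 0 = (f ^^ fst (prod_decode (R 0))) (snd (prod_decode (R 0)))" for R
  proof -
    let ?n = "fst (prod_decode (R 0))" and ?y = "snd (prod_decode (R 0))"
    obtain S1 where S1: "exec Q unpair_cmd R S1" "S1 0 = ?y" "S1 1 = ?n"
      using exec_unpair_cmd by blast
    let ?S2 = "S1(B := 0)"
    let ?S3 = "?S2(1 := 0, B := ?S2 B + ?S2 1)"
    have "\<exists>S. exec Q (While B cf) ?S3 S \<and> S 0 = (f ^^ ?n) ?y"
    proof (rule exec_While_invariant[where I="\<lambda>S. S B \<le> ?n \<and> S 0 = (f ^^ (?n - S B)) ?y"])
      fix S :: "nat \<Rightarrow> nat"
      assume I: "S B \<le> ?n \<and> S 0 = (f ^^ (?n - S B)) ?y" and nz: "S B \<noteq> 0"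
      obtain T where T: "exec Q cf (S(B := S B - 1)) T" "T 0 = f ((S(B := S B - 1)) 0)"
        using cf by blast
      have TB: "T B = S B - 1" using exec_frame[OF T(1) B(1)] by simp
      have "?n - (S B - 1) = Suc (?n - S B)" using I nz by simp arith
      then have "T 0 = (f ^^ (?n - T B)) ?y" using T(2) I B TB by simp
      then show "\<exists>T. exec Q cf (S(B := S B - 1)) T \<and> (T B \<le> ?n \<and> T 0 = (f ^^ (?n - T B)) ?y) \<and> T B < S B"
        using T(1) TB I nz by (intro exI[of _ T]) auto
    qed (use S1 B in simp_all)
    then obtain S4 where "exec Q (While B cf) ?S3 S4" "S4 0 = (f ^^ ?n) ?y" by blast
    moreover have "exec Q (seqs [unpair_cmd, clear B, move 1 B, While B cf]) R S4"
      using B by (intro exec_seqs_Cons[OF S1(1)] exec_seqs_Cons[OF exec_clear] exec_seqs_Cons[OF exec_move]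
          exec_seqs_Cons[OF calculation(1)] exec_seqs_Nil) simp
    ultimately show ?thesis by blast
  qed
  then show ?thesis unfolding computable_def by blast
qed

definition npair :: "nat \<Rightarrow> nat \<Rightarrow> nat" where "npair a b = prod_encode (a, b)"
definition nfst :: "nat \<Rightarrow> nat" where "nfst x = fst (prod_decode x)"
definition nsnd :: "nat \<Rightarrow> nat" where "nsnd x = snd (prod_decode x)"

lemma nfst_npair [simp]: "nfst (npair a b) = a"
  and nsnd_npair [simp]: "nsnd (npair a b) = b"
  by (simp_all add: npair_def nfst_def nsnd_def)

lemma nfst_le: "nfst x \<le> x"
  unfolding nfst_def by (metis le_prod_encode_1 prod.collapse prod_decode_inverse)

lemma computable_npair [computable_intros]:
  "computable Q f \<Longrightarrow> computable Q g \<Longrightarrow> computable Q (\<lambda>x. npair (f x) (g x))"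
  unfolding npair_def by (rule computable_prod_encode)

lemma computable_nfst [computable_intros]: "computable Q f \<Longrightarrow> computable Q (\<lambda>x. nfst (f x))"
  unfolding nfst_def by (rule computable_comp[OF computable_fst_prod_decode])

lemma computable_nsnd [computable_intros]: "computable Q f \<Longrightarrow> computable Q (\<lambda>x. nsnd (f x))"
  unfolding nsnd_def by (rule computable_comp[OF computable_snd_prod_decode])

lemma computable_SucI [computable_intros]: "computable Q f \<Longrightarrow> computable Q (\<lambda>x. Suc (f x))"
  by (rule computable_comp[OF computable_Suc])

lemma computable_const [computable_intros]: "computable Q (\<lambda>x. c)"
  by (induction c) (auto intro: computable_zero computable_SucI)

lemma funpow_npair: "((\<lambda>q. npair (nfst q) (h (nfst q) (nsnd q))) ^^ k) (npair p s) = npair p ((h p ^^ k) s)"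
  by (induction k) auto

lemma computable_funpow [computable_intros]:
  assumes "computable Q (\<lambda>q. h (nfst q) (nsnd q))" and "computable Q a" "computable Q n" "computable Q z"
  shows "computable Q (\<lambda>x. (h (a x) ^^ n x) (z x))"
proof -
  let ?G = "\<lambda>q. npair (nfst q) (h (nfst q) (nsnd q))"
  have "computable Q ?G"
    using assms(1) by (intro computable_intros)
  then have G: "computable Q (\<lambda>y. (?G ^^ nfst y) (nsnd y))"
    using computable_funpow_prod_decode[of Q ?G] by (simp add: nfst_def nsnd_def)
  have "computable Q (\<lambda>x. nsnd ((\<lambda>y. (?G ^^ nfst y) (nsnd y)) (npair (n x) (npair (a x) (z x)))))"
    using assms by (intro computable_nsnd computable_comp[OF G] computable_npair)
  then show ?thesis by (simp add: funpow_npair)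
qed

lemma computable_add [computable_intros]:
  assumes "computable Q f" "computable Q g"
  shows "computable Q (\<lambda>x. f x + g x)"
proof -
  have "computable Q (\<lambda>x. ((\<lambda>_ s. Suc s) 0 ^^ f x) (g x))"
    using assms by (intro computable_funpow computable_intros)
  then show ?thesis by (simp add: Suc_funpow)
qed

lemma computable_pred: "computable Q (\<lambda>x. x - 1)"
proof -
  let ?h = "\<lambda>(p::nat) s. npair (nsnd s) (Suc (nsnd s))"
  have "computable Q (\<lambda>x. nfst ((?h 0 ^^ x) (npair 0 0)))"
    by (intro computable_intros computable_funpow[where h="?h" and a="\<lambda>x. 0"])
  moreover have "(?h 0 ^^ k) (npair 0 0) = npair (k - 1) k" for k
    by (induction k) auto
  ultimately show ?thesis by simp
qed

lemma computable_diff [computable_intros]: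
  assumes "computable Q f" "computable Q g"
  shows "computable Q (\<lambda>x. f x - g x)"
proof -
  have "computable Q (\<lambda>x. ((\<lambda>_ s. s - 1) 0 ^^ g x) (f x))"
    using assms by (intro computable_funpow computable_intros computable_comp[OF computable_pred])
  moreover have "((\<lambda>s. s - 1) ^^ k) m = m - k" for k m :: nat
    by (induction k) auto
  ultimately show ?thesis by simp
qed

lemma computable_mult [computable_intros]:
  assumes "computable Q f" "computable Q g"
  shows "computable Q (\<lambda>x. f x * g x)"
proof -
  have "computable Q (\<lambda>x. ((\<lambda>p s. s + p) (g x) ^^ f x) 0)"
    using assms by (intro computable_funpow computable_intros)
  moreover have "((\<lambda>s. s + m) ^^ k) 0 = k * m" for k m :: nat
    by (induction k) auto
  ultimately show ?thesis by simp
qed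

definition decidable :: "orcl \<Rightarrow> (nat \<Rightarrow> bool) \<Rightarrow> bool" where
  "decidable Q P \<longleftrightarrow> computable Q (\<lambda>x. if P x then 1 else 0)"

lemma computable_If [computable_intros]:
  assumes "decidable Q P" "computable Q g" "computable Q h"
  shows "computable Q (\<lambda>x. if P x then g x else h x)"
proof -
  have "computable Q (\<lambda>x. ((\<lambda>p s. p) (g x) ^^ (if P x then 1 else 0)) (h x))"
    using assms unfolding decidable_def by (intro computable_funpow computable_intros)
  moreover have "((\<lambda>s. g x) ^^ (if P x then 1 else 0)) (h x) = (if P x then g x else h x)" for x
    by simp
  ultimately show ?thesis by simp
qed

lemma decidable_eq [computable_intros]:
  assumes "computable Q f" "computable Q g"
  shows "decidable Q (\<lambda>x. f x = g x)"
proof -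
  have "computable Q (\<lambda>x. 1 - ((f x - g x) + (g x - f x)))"
    using assms by (intro computable_intros)
  moreover have "1 - ((f x - g x) + (g x - f x)) = (if f x = g x then 1 else 0)" for x
    by auto
  ultimately show ?thesis unfolding decidable_def by simp
qed

lemma decidable_less [computable_intros]:
  assumes "computable Q f" "computable Q g"
  shows "decidable Q (\<lambda>x. f x < g x)"
proof -
  have "computable Q (\<lambda>x. 1 - (1 - (g x - f x)))"
    using assms by (intro computable_intros)
  moreover have "1 - (1 - (g x - f x)) = (if f x < g x then 1 else 0)" for x
    by auto
  ultimately show ?thesis unfolding decidable_def by simp
qed

lemma decidable_le [computable_intros]:
  "computable Q f \<Longrightarrow> computable Q g \<Longrightarrow> decidable Q (\<lambda>x. f x \<le> g x)"
  using decidable_less[of Q f "\<lambda>x. Suc (g x)"] by (simp add: less_Suc_eq_le computable_SucI)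

lemma decidable_not [computable_intros]: "decidable Q P \<Longrightarrow> decidable Q (\<lambda>x. \<not> P x)"
proof -
  assume "decidable Q P"
  then have "computable Q (\<lambda>x. 1 - (if P x then 1 else 0))"
    unfolding decidable_def by (rule computable_diff[OF computable_const])
  moreover have "(\<lambda>x. 1 - (if P x then 1 else 0)) = (\<lambda>x. if \<not> P x then 1 else (0::nat))"
    by auto
  ultimately show ?thesis unfolding decidable_def by simp
qed

lemma decidable_conj [computable_intros]:
  "decidable Q P \<Longrightarrow> decidable Q P' \<Longrightarrow> decidable Q (\<lambda>x. P x \<and> P' x)"
proof -
  assume "decidable Q P" "decidable Q P'"
  then have "computable Q (\<lambda>x. (if P x then 1 else 0) * (if P' x then 1 else 0))"
    unfolding decidable_def by (rule computable_mult)
  moreover have "(\<lambda>x. (if P x then 1 else 0) * (if P' x then 1 else 0)) =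
      (\<lambda>x. if P x \<and> P' x then 1 else (0::nat))"
    by auto
  ultimately show ?thesis unfolding decidable_def by simp
qed

lemma decidable_disj [computable_intros]:
  "decidable Q P \<Longrightarrow> decidable Q P' \<Longrightarrow> decidable Q (\<lambda>x. P x \<or> P' x)"
proof -
  assume "decidable Q P" "decidable Q P'"
  then have "decidable Q (\<lambda>x. \<not> (\<not> P x \<and> \<not> P' x))"
    by (intro decidable_not decidable_conj)
  then show ?thesis by simp
qed

lemma decidable_comp2:
  "decidable Q (\<lambda>q. P (nfst q) (nsnd q)) \<Longrightarrow> computable Q f \<Longrightarrow> computable Q g \<Longrightarrow>
   decidable Q (\<lambda>x. P (f x) (g x))"
  unfolding decidable_def by (drule computable_comp[where g="\<lambda>x. npair (f x) (g x)"]) (auto intro: computable_npair)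

primrec least_below :: "nat \<Rightarrow> (nat \<Rightarrow> bool) \<Rightarrow> nat" where
  "least_below 0 P = 0"
| "least_below (Suc b) P = (if least_below b P < b then least_below b P else if P b then b else Suc b)"

lemma least_below_eq: "least_below b P = (if \<exists>t<b. P t then LEAST t. P t else b)"
proof (induction b)
  case (Suc b)
  show ?case
  proof (cases "\<exists>t<b. P t")
    case True
    then obtain t where "t < b" "P t" by blast
    then have "(LEAST t. P t) < b" using Least_le[of P t] by linarith
    with True Suc.IH show ?thesis by (auto intro: less_SucI)
  next
    case False
    then have "P b \<Longrightarrow> (LEAST t. P t) = b"
      by (intro Least_equality) (auto simp: not_less)
    with False Suc.IH show ?thesis by (auto simp: less_Suc_eq)
  qed
qed simp

lemma least_below_less_iff: "least_below b P < b \<longleftrightarrow> (\<exists>t<b. P t)"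
proof -
  have "(LEAST t. P t) < b" if "t < b" "P t" for t
    using that Least_le[of P t] by linarith
  then show ?thesis by (auto simp: least_below_eq)
qed

lemma least_below_Least: "\<exists>t<b. P t \<Longrightarrow> least_below b P = (LEAST t. P t)"
  by (simp add: least_below_eq)

lemma computable_least_below [computable_intros]:
  assumes P: "decidable Q (\<lambda>q. P (nfst q) (nsnd q))" and "computable Q a" and "computable Q b"
  shows "computable Q (\<lambda>x. least_below (b x) (P (a x)))"
proof -
  let ?h = "\<lambda>p s. npair (Suc (nfst s))
    (if nsnd s < nfst s then nsnd s else if P p (nfst s) then nfst s else Suc (nfst s))"
  have "computable Q (\<lambda>q. ?h (nfst q) (nsnd q))"
    by (intro computable_intros decidable_comp2[OF P])
  then have "computable Q (\<lambda>x. nsnd ((?h (a x) ^^ b x) (npair 0 0)))"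
    using assms by (intro computable_nsnd computable_funpow computable_const)
  moreover have "(?h p ^^ k) (npair 0 0) = npair k (least_below k (P p))" for p k
    by (induction k) auto
  ultimately show ?thesis by simp
qed

declare least_below.simps(2) [simp del]

lemma decidable_char_orc:
  assumes "computable (char_orc X) f"
  shows "decidable (char_orc X) (\<lambda>x. f x \<in> X)"
proof -
  have "computable (char_orc X) (\<lambda>y. the (char_orc X y))"
    by (rule computable_oracle) (simp add: char_orc_def)
  from computable_comp[OF this assms] show ?thesis
    by (simp add: decidable_def char_orc_def)
qed

lemma computable_in_if_decidable:
  assumes "decidable (char_orc X) (\<lambda>x. x \<in> A)"
  shows "computable_in A X"
proof -
  obtain c where c: "\<And>R. \<exists>R'. exec (char_orc X) c R R' \<and> R' 0 = (if R 0 \<in> A then 1 else 0)"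
    using assms unfolding decidable_def computable_def by blast
  have "\<exists>s pc R. run (compile c 0) (char_orc X) s (0, init x) = Some (pc, R) \<and>
      length (compile c 0) \<le> pc \<and> R 0 = (if x \<in> A then 1 else 0)" for x
  proof -
    obtain R' where "exec (char_orc X) c (init x) R'" "R' 0 = (if x \<in> A then 1 else 0)"
      using c[of "init x"] by (auto simp: init_def)
    then show ?thesis using reaches_compile unfolding reaches_def by fastforce
  qed
  then show ?thesis unfolding computable_in_def by blast
qed


section \<open>Operations on codes of lists\<close>

definition hd_code :: "nat \<Rightarrow> nat" where "hd_code x = nfst (x - 1)"
definition tl_code :: "nat \<Rightarrow> nat" where "tl_code x = nsnd (x - 1)"
definition cons_code :: "nat \<Rightarrow> nat \<Rightarrow> nat" where "cons_code a y = Suc (npair a y)"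
definition nth_code :: "nat \<Rightarrow> nat \<Rightarrow> nat" where "nth_code x i = hd_code ((tl_code ^^ i) x)"

lemma hd_code_Suc [simp]: "hd_code (Suc (prod_encode (a, y))) = a"
  by (simp add: hd_code_def nfst_def)

lemma tl_code_Suc [simp]: "tl_code (Suc (prod_encode (a, y))) = y"
  by (simp add: tl_code_def nsnd_def)

lemma tl_code_list_encode [simp]: "tl_code (list_encode l) = list_encode (tl l)"
  by (cases l) (simp_all add: tl_code_def nsnd_def)

lemma cons_code_list_encode [simp]: "cons_code a (list_encode l) = list_encode (a # l)"
  by (simp add: cons_code_def npair_def)

lemma funpow_tl_code: "(tl_code ^^ k) (list_encode l) = list_encode (drop k l)"
  by (induction k) (auto simp: drop_Suc tl_drop)

lemma nth_code_list_encode: "i < length l \<Longrightarrow> nth_code (list_encode l) i = l ! i"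
  unfolding nth_code_def funpow_tl_code by (simp add: Cons_nth_drop_Suc[symmetric])

lemma computable_hd_code [computable_intros]: "computable Q f \<Longrightarrow> computable Q (\<lambda>x. hd_code (f x))"
  unfolding hd_code_def by (intro computable_intros)

lemma computable_tl_code [computable_intros]: "computable Q f \<Longrightarrow> computable Q (\<lambda>x. tl_code (f x))"
  unfolding tl_code_def by (intro computable_intros)

lemma computable_cons_code [computable_intros]:
  "computable Q f \<Longrightarrow> computable Q g \<Longrightarrow> computable Q (\<lambda>x. cons_code (f x) (g x))"
  unfolding cons_code_def by (intro computable_intros)

lemma computable_nth_code [computable_intros]:
  "computable Q f \<Longrightarrow> computable Q g \<Longrightarrow> computable Q (\<lambda>x. nth_code (f x) (g x))"
  unfolding nth_code_def
  by (intro computable_hd_code computable_funpow[where h="\<lambda>_. tl_code" and a="\<lambda>x. 0"])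
     (auto intro!: computable_intros)

text \<open>The length is found by stripping the list, counting the nonempty tails; the code of a list
  bounds its length, so that many steps suffice.\<close>

definition length_step :: "nat \<Rightarrow> nat" where
  "length_step s = npair (tl_code (nfst s)) (nsnd s + (if nfst s = 0 then 0 else 1))"

definition length_code :: "nat \<Rightarrow> nat" where
  "length_code x = nsnd ((length_step ^^ x) (npair x 0))"

lemma length_le_list_encode: "length l \<le> list_encode l"
  by (induction l) (auto simp: le_prod_encode_2 intro: le_trans[OF _ le_prod_encode_2])

lemma funpow_length_step:
  "(length_step ^^ k) (npair (list_encode l) 0) = npair (list_encode (drop k l)) (min k (length l))"
proof (induction k)
  case (Suc k)
  have "list_encode (drop k l) = 0 \<longleftrightarrow> length l \<le> k"
    by (metis drop_eq_Nil list_encode.simps(1) list_encode_eq)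
  then show ?case using Suc by (auto simp: length_step_def drop_Suc tl_drop min_def)
qed simp

lemma length_code_list_encode [simp]: "length_code (list_encode l) = length l"
  unfolding length_code_def funpow_length_step using length_le_list_encode[of l] by simp

lemma length_code_eq: "length_code x = length (list_decode x)"
  using length_code_list_encode[of "list_decode x"] by simp

lemma computable_length_code [computable_intros]:
  "computable Q f \<Longrightarrow> computable Q (\<lambda>x. length_code (f x))"
  unfolding length_code_def
  by (intro computable_nsnd computable_funpow[where h="\<lambda>_. length_step" and a="\<lambda>x. 0"])
     (auto intro!: computable_intros simp: length_step_def)

text \<open>Updating position \<open>i\<close>: move the first \<open>i\<close> entries onto an accumulator (reversing them),
  replace the head of the rest, and move them back.\<close>

definition unstack_step :: "nat \<Rightarrow> nat" where
  "unstack_step s = npair (cons_code (hd_code (nsnd s)) (nfst s)) (tl_code (nsnd s))"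

definition restack_step :: "nat \<Rightarrow> nat" where
  "restack_step s = npair (tl_code (nfst s)) (cons_code (hd_code (nfst s)) (nsnd s))"

definition update_code :: "nat \<Rightarrow> nat \<Rightarrow> nat \<Rightarrow> nat" where
  "update_code l i v = (let s = (unstack_step ^^ i) (npair 0 l)
     in nsnd ((restack_step ^^ i) (npair (nfst s) (cons_code v (tl_code (nsnd s))))))"

lemma funpow_unstack_step: "k \<le> length Z \<Longrightarrow>
  (unstack_step ^^ k) (npair (list_encode Y) (list_encode Z)) =
    npair (list_encode (rev (take k Z) @ Y)) (list_encode (drop k Z))"
proof (induction k)
  case (Suc k)
  then have "drop k Z = Z ! k # drop (Suc k) Z" by (simp add: Cons_nth_drop_Suc)
  with Suc show ?case by (simp add: unstack_step_def take_Suc_conv_app_nth)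
qed simp

lemma funpow_restack_step: "k \<le> length X \<Longrightarrow>
  (restack_step ^^ k) (npair (list_encode X) (list_encode B)) =
    npair (list_encode (drop k X)) (list_encode (rev (take k X) @ B))"
proof (induction k)
  case (Suc k)
  then have "drop k X = X ! k # drop (Suc k) X" by (simp add: Cons_nth_drop_Suc)
  with Suc show ?case by (simp add: restack_step_def take_Suc_conv_app_nth)
qed simp

lemma update_code_list_encode:
  assumes "i < length L"
  shows "update_code (list_encode L) i v = list_encode (L[i := v])"
proof -
  have "(unstack_step ^^ i) (npair 0 (list_encode L)) =
      npair (list_encode (rev (take i L))) (list_encode (drop i L))"
    using funpow_unstack_step[of i L "[]"] assms by simp
  moreover have "drop i L = L ! i # drop (Suc i) L"
    using assms by (simp add: Cons_nth_drop_Suc)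
  moreover have "(restack_step ^^ i) (npair (list_encode (rev (take i L))) (list_encode (v # drop (Suc i) L))) =
      npair (list_encode (drop i (rev (take i L)))) (list_encode (take i L @ v # drop (Suc i) L))"
    using funpow_restack_step[of i "rev (take i L)" "v # drop (Suc i) L"] assms by simp
  ultimately show ?thesis
    unfolding update_code_def using assms by (simp add: upd_conv_take_nth_drop)
qed

lemma computable_update_code [computable_intros]:
  "computable Q f \<Longrightarrow> computable Q g \<Longrightarrow> computable Q h \<Longrightarrow>
   computable Q (\<lambda>x. update_code (f x) (g x) (h x))"
  unfolding update_code_def Let_def
  by (intro computable_nsnd computable_nfst computable_npair computable_cons_code computable_tl_code
        computable_funpow[where h="\<lambda>_. restack_step" and a="\<lambda>x. 0"]
        computable_funpow[where h="\<lambda>_. unstack_step" and a="\<lambda>x. 0"])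
     (auto intro!: computable_intros simp: unstack_step_def restack_step_def)

lemma computable_div_const [computable_intros]:
  assumes "computable Q f"
  shows "computable Q (\<lambda>x. f x div m)"
proof (cases "m = 0")
  case False
  have "least_below (Suc x) (\<lambda>q. x < m * Suc q) = x div m" for x
  proof -
    have iff: "x < m * Suc q \<longleftrightarrow> x div m \<le> q" for q
      using False by (metis div_less_iff_less_mult less_Suc_eq_le mult.commute not_gr_zero)
    then have "(LEAST q. x < m * Suc q) = x div m"
      by (intro Least_equality) auto
    moreover have "\<exists>q<Suc x. x < m * Suc q"
      using iff[of "x div m"] div_le_dividend[of x m] le_imp_less_Suc by blast
    ultimately show ?thesis by (simp add: least_below_Least)
  qed
  moreover have "computable Q (\<lambda>x. least_below (Suc (f x)) (\<lambda>q. f x < m * Suc q))"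
    using assms by (intro computable_least_below computable_intros)
  ultimately show ?thesis by simp
qed (simp add: computable_const)

lemma computable_mod_const [computable_intros]:
  assumes "computable Q f"
  shows "computable Q (\<lambda>x. f x mod m)"
proof -
  have "computable Q (\<lambda>x. f x - m * (f x div m))"
    using assms by (intro computable_intros)
  then show ?thesis by (simp add: minus_mult_div_eq_mod)
qed

lemma computable_min [computable_intros]:
  "computable Q f \<Longrightarrow> computable Q g \<Longrightarrow> computable Q (\<lambda>x. min (f x) (g x))"
  unfolding min_def by (intro computable_intros)


section \<open>Simulating the register machines on codes\<close>

lemma list_decode_le: "x \<in> set (list_decode n) \<Longrightarrow> x \<le> n"
proof (induction n rule: list_decode.induct)
  case (2 n)
  obtain a b where ab: "prod_decode n = (a, b)" by fastforce
  then have "a \<le> n" "b \<le> n"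
    using le_prod_encode_1[of a b] le_prod_encode_2[of b a] by (metis prod_decode_inverse)+
  with 2 ab show ?case by (auto split: prod.splits)
qed simp

lemma decode_instr_eq: "decode_instr w =
  (if w mod 3 = 0 then Inc (nfst (w div 3)) (nsnd (w div 3))
   else if w mod 3 = 1 then Dec (nfst (w div 3)) (nfst (nsnd (w div 3))) (nsnd (nsnd (w div 3)))
   else Orc (nfst (w div 3)) (nsnd (w div 3)))"
  by (simp add: decode_instr_def nfst_def nsnd_def Let_def)

lemma machine_register_le:
  assumes "pc < length (machine n)" and "machine n ! pc \<in> {Inc r j, Dec r j k, Orc r j}"
  shows "r \<le> n"
proof -
  define w where "w = list_decode n ! pc"
  have "w \<le> n" using assms(1) list_decode_le[of w n] by (simp add: machine_def w_def)
  moreover have "machine n ! pc = decode_instr w" using assms(1) by (simp add: machine_def w_def)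
  ultimately show ?thesis
    using assms(2) nfst_le[of "w div 3"] div_le_dividend[of w 3]
    by (auto simp: decode_instr_eq split: if_splits)
qed

lemma length_machine: "length (machine n) = length_code n"
  by (simp add: machine_def length_code_eq)

text \<open>A configuration of \<open>machine n\<close> is coded as \<open>npair 0 (npair pc regs)\<close>, where \<open>regs\<close> codes
  registers \<open>0..n\<close>: the instructions of \<open>machine n\<close> are coded by numbers \<open>\<le> n\<close> and so mention only
  these registers. An oracle query outside the string \<open>\<sigma>\<close> is coded by a nonzero first component.
  The oracle string enters through \<open>c = scode \<sigma>\<close>, which lists \<open>\<sigma>\<close> backwards.\<close>

definition simulates :: "nat \<Rightarrow> config option \<Rightarrow> nat \<Rightarrow> bool" where
  "simulates n cfg e \<longleftrightarrow> (case cfg of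
      None \<Rightarrow> nfst e \<noteq> 0
    | Some (pc, R) \<Rightarrow> (\<exists>rl. e = npair 0 (npair pc (list_encode rl)) \<and> length rl = Suc n \<and>
        (\<forall>r. R r = (if r < Suc n then rl ! r else 0))))"

definition sim_step :: "nat \<Rightarrow> nat \<Rightarrow> nat \<Rightarrow> nat \<Rightarrow> nat" where
  "sim_step n c t e = (let pc = nfst (nsnd e); regs = nsnd (nsnd e);
      w = nth_code n pc; a = w div 3; r = nfst a; v = nth_code regs r in
    if nfst e \<noteq> 0 \<or> length_code n \<le> pc then e
    else if w mod 3 = 0 then npair 0 (npair (nsnd a) (update_code regs r (Suc v)))
    else if w mod 3 = 1 then
      (if v = 0 then npair 0 (npair (nsnd (nsnd a)) regs)
       else npair 0 (npair (nfst (nsnd a)) (update_code regs r (v - 1))))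
    else if v < min t (length_code c) then
      npair 0 (npair (nsnd a) (update_code regs r (nth_code c (length_code c - 1 - v))))
    else npair 1 0)"

lemma computable_sim_step [computable_intros]:
  "computable Q n \<Longrightarrow> computable Q c \<Longrightarrow> computable Q t \<Longrightarrow> computable Q e \<Longrightarrow>
   computable Q (\<lambda>x. sim_step (n x) (c x) (t x) (e x))"
  unfolding sim_step_def Let_def by (intro computable_intros)

lemma sim_step_running:
  assumes pc: "pc < length (machine n)" and rl: "length rl = Suc n"
  shows "sim_step n c t (npair 0 (npair pc (list_encode rl))) =
    (case machine n ! pc of
      Inc r j \<Rightarrow> npair 0 (npair j (list_encode (rl[r := Suc (rl ! r)])))
    | Dec r j k \<Rightarrow> if rl ! r = 0 then npair 0 (npair k (list_encode rl))
        else npair 0 (npair j (list_encode (rl[r := rl ! r - 1])))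
    | Orc r j \<Rightarrow> if rl ! r < min t (length_code c)
        then npair 0 (npair j (list_encode (rl[r := rev (list_decode c) ! (rl ! r)])))
        else npair 1 0)"
proof -
  define w where "w = list_decode n ! pc"
  have pcl: "pc < length (list_decode n)" using pc by (simp add: machine_def)
  have instr: "machine n ! pc = decode_instr w"
    using pcl by (simp add: machine_def w_def)
  have "w \<le> n" using pcl list_decode_le[of w n] by (simp add: w_def)
  then have r: "nfst (w div 3) < length rl"
    using rl nfst_le[of "w div 3"] div_le_dividend[of w 3] by linarith
  have w: "nth_code n pc = w"
    using nth_code_list_encode[OF pcl] by (simp add: w_def)
  have "nth_code c (length_code c - 1 - i) = rev (list_decode c) ! i" if "i < length_code c" for i
    using that nth_code_list_encode[of "length_code c - 1 - i" "list_decode c"]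
    by (simp add: length_code_eq rev_nth)
  then show ?thesis
    using pc r unfolding instr decode_instr_eq
    by (simp add: sim_step_def Let_def w length_machine nth_code_list_encode update_code_list_encode)
qed

lemma simulates_step:
  assumes "simulates n (Some (pc, R)) e"
  shows "simulates n (step (machine n) (str_orc (take t (rev (list_decode c)))) (pc, R)) (sim_step n c t e)"
proof -
  obtain rl where e: "e = npair 0 (npair pc (list_encode rl))" and rl: "length rl = Suc n"
    and R: "\<And>r. R r = (if r < Suc n then rl ! r else 0)"
    using assms unfolding simulates_def by auto
  show ?thesis
  proof (cases "pc < length (machine n)")
    case False
    then show ?thesis using assms e by (simp add: step_def sim_step_def length_machine)
  next
    case True
    have upd: "simulates n (Some (j, R(r := v))) (npair 0 (npair j (list_encode (rl[r := v]))))"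
      if "r \<le> n" for j r v
      using that rl R by (auto simp: simulates_def nth_list_update)
    have "simulates n (Some (j, R)) (npair 0 (npair j (list_encode rl)))" for j
      using rl R by (auto simp: simulates_def)
    note facts = this upd e True R sim_step_running[OF True rl, of c t]
    show ?thesis
    proof (cases "machine n ! pc")
      case (Inc r j)
      with machine_register_le[OF True] have "r \<le> n" by auto
      with Inc facts show ?thesis by (simp add: step_def)
    next
      case (Dec r j k)
      with machine_register_le[OF True] have "r \<le> n" by auto
      with Dec facts show ?thesis by (simp add: step_def)
    next
      case (Orc r j)
      with machine_register_le[OF True] have "r \<le> n" by auto
      with Orc facts show ?thesis
        by (auto simp: step_def str_orc_def length_code_eq simulates_def)
    qed
  qed
qed

definition sim_init :: "nat \<Rightarrow> nat" where
  "sim_init n = npair 0 (npair 0 (list_encode (n # replicate n 0)))"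

lemma computable_sim_init [computable_intros]:
  assumes "computable Q f"
  shows "computable Q (\<lambda>x. sim_init (f x))"
proof -
  have "computable Q (\<lambda>x. npair 0 (npair 0 (cons_code (f x) (((\<lambda>_. cons_code 0) 0 ^^ f x) 0))))"
    using assms by (intro computable_intros)
  moreover have "(cons_code 0 ^^ k) 0 = list_encode (replicate k 0)" for k
    by (induction k) auto
  ultimately show ?thesis unfolding sim_init_def by simp
qed

lemma simulates_run:
  "simulates n (run (machine n) (str_orc (take t (rev (list_decode c)))) s (0, init n))
     ((sim_step n c t ^^ s) (sim_init n))"
proof (induction s)
  case 0
  show ?case unfolding simulates_def sim_init_def
    by (simp, intro exI[of _ "n # replicate n 0"]) (auto simp: init_def nth_Cons')
next
  case (Suc s)
  show ?case
  proof (cases "run (machine n) (str_orc (take t (rev (list_decode c)))) s (0, init n)")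
    case None
    with Suc show ?thesis by (simp add: simulates_def sim_step_def)
  next
    case (Some cfg)
    with Suc simulates_step[of n "fst cfg" "snd cfg"] show ?thesis by simp
  qed
qed

lemma halted_at_mono:
  assumes "halted_at p Q x s" and "s \<le> s'"
  shows "halted_at p Q x s'"
  using assms(2)
proof (induction s' rule: dec_induct)
  case base
  show ?case by (rule assms(1))
next
  case (step s')
  then obtain pc R where "run p Q s' (0, init x) = Some (pc, R)" "length p \<le> pc"
    unfolding halted_at_def by (auto split: option.splits)
  then show ?case unfolding halted_at_def by (simp add: step_def)
qed

lemma conv_iff_halted_at_last:
  "conv n \<tau> \<longleftrightarrow> 0 < length \<tau> \<and> halted_at (machine n) (str_orc \<tau>) n (length \<tau> - 1)"
proof
  assume "conv n \<tau>"
  then obtain s where "s < length \<tau>" "halted_at (machine n) (str_orc \<tau>) n s"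
    unfolding conv_def by blast
  then show "0 < length \<tau> \<and> halted_at (machine n) (str_orc \<tau>) n (length \<tau> - 1)"
    using halted_at_mono by fastforce
next
  assume "0 < length \<tau> \<and> halted_at (machine n) (str_orc \<tau>) n (length \<tau> - 1)"
  then show "conv n \<tau>" unfolding conv_def by (intro exI[of _ "length \<tau> - 1"]) auto
qed

definition conv_code :: "nat \<Rightarrow> nat \<Rightarrow> nat \<Rightarrow> bool" where
  "conv_code n c t \<longleftrightarrow> 0 < min t (length_code c) \<and>
     (let e = (sim_step n c t ^^ (min t (length_code c) - 1)) (sim_init n)
      in nfst e = 0 \<and> length_code n \<le> nfst (nsnd e))"

lemma conv_code_iff: "conv_code n c t \<longleftrightarrow> conv n (take t (rev (list_decode c)))"
proof -
  let ?\<tau> = "take t (rev (list_decode c))"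
  let ?s = "min t (length_code c) - 1"
  have "halted_at (machine n) (str_orc ?\<tau>) n ?s \<longleftrightarrow>
      nfst ((sim_step n c t ^^ ?s) (sim_init n)) = 0 \<and>
      length_code n \<le> nfst (nsnd ((sim_step n c t ^^ ?s) (sim_init n)))"
    using simulates_run[of n t c ?s] unfolding halted_at_def simulates_def
    by (auto simp: length_machine split: option.splits)
  then show ?thesis
    unfolding conv_code_def conv_iff_halted_at_last by (simp add: length_code_eq Let_def min.commute)
qed

lemma decidable_conv_code [computable_intros]:
  "computable Q n \<Longrightarrow> computable Q c \<Longrightarrow> computable Q t \<Longrightarrow>
   decidable Q (\<lambda>x. conv_code (n x) (c x) (t x))"
  unfolding conv_code_def Let_def
  by (intro computable_intros computable_funpow[where h="\<lambda>p. sim_step (nfst p) (nfst (nsnd p)) (nsnd (nsnd p))"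
        and a="\<lambda>x. npair (n x) (npair (c x) (t x))", simplified])


section \<open>Basic properties of the jump\<close>

lemma jt_less_Suc: "jt \<sigma> k < jt \<sigma> (Suc k)"
  by (auto simp: tnext_def)

lemma strict_mono_jt: "strict_mono (jt \<sigma>)"
  unfolding strict_mono_Suc_iff using jt_less_Suc by blast

lemma jt_lower_bound: "k + 2 \<le> jt \<sigma> k"
proof (induction k)
  case (Suc k)
  then show ?case using jt_less_Suc[of \<sigma> k] by simp
qed (simp add: tnext_def)

lemma Jk_eq_least_below: "Jk \<sigma> = least_below (Suc (length \<sigma>)) (\<lambda>k. length \<sigma> < jt \<sigma> k)"
proof -
  have "\<exists>k<Suc (length \<sigma>). length \<sigma> < jt \<sigma> k"
    using jt_lower_bound[of "length \<sigma>" \<sigma>] by (intro exI[of _ "length \<sigma>"]) simp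
  then show ?thesis unfolding Jk_def by (simp add: least_below_Least)
qed

lemma jt_le_length: "i < Jk \<sigma> \<Longrightarrow> jt \<sigma> i \<le> length \<sigma>"
  unfolding Jk_def using not_less_Least by fastforce

lemma length_Jump [simp]: "length (Jump \<sigma>) = Jk \<sigma>"
  by (simp add: Jump_def)

section \<open>The jump is computable\<close>

text \<open>Since \<open>take t \<sigma> = \<sigma>\<close> for \<open>t \<ge> length \<sigma>\<close>, the search for the least \<open>t\<close> with
  \<open>conv n (take t \<sigma>)\<close> can stop at \<open>length \<sigma>\<close>.\<close>

definition tnext_code :: "nat \<Rightarrow> nat \<Rightarrow> nat \<Rightarrow> nat" where
  "tnext_code c n prev = (let t = least_below (Suc (length_code c)) (conv_code n c) in
     if t < Suc (length_code c) then max (prev + 1) t else prev + 1)"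

lemma tnext_code_eq: "tnext_code c n prev = tnext (rev (list_decode c)) n prev"
proof -
  let ?\<sigma> = "rev (list_decode c)"
  have conv: "conv_code n c = (\<lambda>t. conv n (take t ?\<sigma>))"
    by (auto simp: conv_code_iff)
  have "(\<exists>t. conv n (take t ?\<sigma>)) \<longleftrightarrow> (\<exists>t<Suc (length_code c). conv n (take t ?\<sigma>))"
  proof
    assume "\<exists>t. conv n (take t ?\<sigma>)"
    then obtain t where "conv n (take t ?\<sigma>)" by blast
    moreover have "take (min t (length_code c)) ?\<sigma> = take t ?\<sigma>"
      by (simp add: length_code_eq min_def)
    ultimately have "conv n (take (min t (length_code c)) ?\<sigma>)" by simp
    then show "\<exists>t<Suc (length_code c). conv n (take t ?\<sigma>)"
      by (intro exI[of _ "min t (length_code c)"]) auto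
  qed auto
  then show ?thesis
    unfolding tnext_code_def tnext_def conv Let_def least_below_less_iff
    by (auto simp: least_below_Least)
qed

lemma computable_tnext_code [computable_intros]:
  assumes "computable Q c" "computable Q n" "computable Q p"
  shows "computable Q (\<lambda>x. tnext_code (c x) (n x) (p x))"
proof -
  have "decidable Q (\<lambda>q. conv_code (nfst (nfst q)) (nsnd (nfst q)) (nsnd q))"
    by (intro computable_intros)
  then have "computable Q (\<lambda>x. least_below (Suc (length_code (c x)))
      ((\<lambda>a t. conv_code (nfst a) (nsnd a) t) (npair (n x) (c x))))"
    using assms by (intro computable_least_below computable_intros) simp_all
  then have L: "computable Q (\<lambda>x. least_below (Suc (length_code (c x))) (conv_code (n x) (c x)))"
    by simp
  show ?thesis
    using assms unfolding tnext_code_def Let_def max_def by (intro L computable_intros)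
qed

definition jt_step :: "nat \<Rightarrow> nat \<Rightarrow> nat" where
  "jt_step c s = npair (Suc (nfst s)) (tnext_code c (nfst s) (nsnd s))"

definition jt_code :: "nat \<Rightarrow> nat \<Rightarrow> nat" where
  "jt_code c k = nsnd ((jt_step c ^^ Suc k) (npair 0 1))"

lemma funpow_jt_step: "(jt_step c ^^ Suc k) (npair 0 1) = npair (Suc k) (jt (rev (list_decode c)) k)"
proof (induction k)
  case (Suc k)
  have "(jt_step c ^^ Suc (Suc k)) (npair 0 1) = jt_step c ((jt_step c ^^ Suc k) (npair 0 1))"
    by simp
  also have "\<dots> = npair (Suc (Suc k)) (jt (rev (list_decode c)) (Suc k))"
    unfolding Suc by (simp add: jt_step_def tnext_code_eq)
  finally show ?case .
qed (simp add: jt_step_def tnext_code_eq)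

lemma jt_code_eq: "jt_code c k = jt (rev (list_decode c)) k"
  unfolding jt_code_def funpow_jt_step by simp

lemma computable_jt_code [computable_intros]:
  "computable Q f \<Longrightarrow> computable Q g \<Longrightarrow> computable Q (\<lambda>x. jt_code (f x) (g x))"
  unfolding jt_code_def
  by (intro computable_nsnd computable_funpow[where h=jt_step]) (auto intro!: computable_intros simp: jt_step_def)

definition Jk_code :: "nat \<Rightarrow> nat" where
  "Jk_code c = least_below (Suc (length_code c)) (\<lambda>k. length_code c < jt_code c k)"

lemma Jk_code_eq: "Jk_code c = Jk (rev (list_decode c))"
  unfolding Jk_code_def Jk_eq_least_below by (simp add: length_code_eq jt_code_eq)

lemma computable_Jk_code [computable_intros]: "computable Q f \<Longrightarrow> computable Q (\<lambda>x. Jk_code (f x))"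
  unfolding Jk_code_def
  by (intro computable_least_below[where P="\<lambda>c k. length_code c < jt_code c k"] computable_intros)

lemma scode_take_rev_list_decode: "scode (take m (rev (list_decode c))) = (tl_code ^^ (length_code c - m)) c"
proof -
  have "(tl_code ^^ (length_code c - m)) c = list_encode (drop (length_code c - m) (list_decode c))"
    using funpow_tl_code[of "length_code c - m" "list_decode c"] by simp
  also have "\<dots> = list_encode (rev (take m (rev (list_decode c))))"
    by (simp add: rev_take length_code_eq)
  finally show ?thesis by (simp add: scode_def)
qed

definition Jump_step :: "nat \<Rightarrow> nat \<Rightarrow> nat" where
  "Jump_step c s = npair (Suc (nfst s)) (cons_code ((tl_code ^^ (length_code c - jt_code c (nfst s))) c) (nsnd s))"

definition Jump_code :: "nat \<Rightarrow> nat" where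
  "Jump_code c = nsnd ((Jump_step c ^^ Jk_code c) (npair 0 0))"

lemma funpow_Jump_step: "(Jump_step c ^^ k) (npair 0 0) =
   npair k (list_encode (rev (map (\<lambda>i. scode (take (jt (rev (list_decode c)) i) (rev (list_decode c)))) [0..<k])))"
  by (induction k) (simp_all add: Jump_step_def scode_take_rev_list_decode jt_code_eq)

lemma Jump_code_eq: "Jump_code c = scode (Jump (rev (list_decode c)))"
  unfolding Jump_code_def funpow_Jump_step Jk_code_eq by (simp add: Jump_def scode_def)

lemma computable_Jump_code [computable_intros]: "computable Q f \<Longrightarrow> computable Q (\<lambda>x. Jump_code (f x))"
  unfolding Jump_code_def
  by (intro computable_nsnd computable_funpow[where h=Jump_step])
     (auto intro!: computable_intros computable_funpow[where h="\<lambda>_. tl_code" and a="\<lambda>x. 0"]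
       simp: Jump_step_def)


section \<open>The jump tree is a tree\<close>

lemma tnext_take:
  assumes "tnext \<sigma> n p \<le> L"
  shows "tnext (take L \<sigma>) n p = tnext \<sigma> n p"
proof -
  have take_take: "take t (take L \<sigma>) = take (min t L) \<sigma>" for t by (simp add: min.commute)
  show ?thesis
  proof (cases "\<exists>t. conv n (take t \<sigma>)")
    case True
    define t0 where "t0 = (LEAST t. conv n (take t \<sigma>))"
    have t0: "conv n (take t0 \<sigma>)" unfolding t0_def using True by (metis LeastI)
    have "tnext \<sigma> n p = max (p + 1) t0" using True by (simp add: tnext_def t0_def)
    then have "t0 \<le> L" using assms by simp
    then have t0': "conv n (take t0 (take L \<sigma>))" using t0 by (simp add: take_take min_def)
    moreover have "(LEAST t. conv n (take t (take L \<sigma>))) = t0"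
    proof (rule Least_equality)
      fix y assume "conv n (take y (take L \<sigma>))"
      then have "t0 \<le> min y L" unfolding take_take t0_def by (rule Least_le)
      then show "t0 \<le> y" by simp
    qed (rule t0')
    ultimately show ?thesis using True by (auto simp: tnext_def t0_def)
  next
    case False
    then show ?thesis by (simp add: tnext_def take_take)
  qed
qed

lemma jt_take: "jt \<sigma> i \<le> L \<Longrightarrow> jt (take L \<sigma>) i = jt \<sigma> i"
proof (induction i)
  case (Suc i)
  then show ?case using jt_less_Suc[of \<sigma> i] by (simp add: tnext_take)
qed (simp add: tnext_take)

lemma Jk_take_jt:
  assumes "i < Jk \<sigma>"
  shows "Jk (take (jt \<sigma> i) \<sigma>) = Suc i"
proof -
  let ?\<tau> = "take (jt \<sigma> i) \<sigma>"
  have jt_eq: "jt ?\<tau> j = jt \<sigma> j" if "j \<le> i" for j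
    using that by (intro jt_take) (simp add: strict_mono_jt strict_mono_less_eq)
  have len: "length ?\<tau> = jt \<sigma> i" using jt_le_length[OF assms] by simp
  show ?thesis
    unfolding Jk_def len
  proof (rule Least_equality)
    show "jt \<sigma> i < jt ?\<tau> (Suc i)"
      using jt_less_Suc[of ?\<tau> i] jt_eq[of i] by simp
  next
    fix j assume j: "jt \<sigma> i < jt ?\<tau> j"
    show "Suc i \<le> j"
    proof (rule ccontr)
      assume "\<not> Suc i \<le> j"
      then have "jt ?\<tau> j \<le> jt \<sigma> i" using jt_eq[of j] by (simp add: strict_mono_jt strict_mono_less_eq)
      with j show False by simp
    qed
  qed
qed

lemma Jump_take_jt:
  assumes "i < Jk \<sigma>"
  shows "Jump (take (jt \<sigma> i) \<sigma>) = take (Suc i) (Jump \<sigma>)"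
proof -
  have "scode (take (jt (take (jt \<sigma> i) \<sigma>) j) (take (jt \<sigma> i) \<sigma>)) = scode (take (jt \<sigma> j) \<sigma>)"
    if "j \<le> i" for j
  proof -
    have "jt \<sigma> j \<le> jt \<sigma> i" using that by (simp add: strict_mono_jt strict_mono_less_eq)
    then show ?thesis by (simp add: jt_take min_def)
  qed
  then show ?thesis
    using assms unfolding Jump_def Jk_take_jt[OF assms] by (auto simp: take_map less_Suc_eq_le)
qed

lemma Jump_Nil: "Jump [] = []"
proof -
  have "Jk [] = 0" unfolding Jk_def using jt_lower_bound[of 0 "[]"] by (intro Least_equality) auto
  then show ?thesis by (simp add: Jump_def)
qed

lemma is_tree_take: "is_tree T \<Longrightarrow> \<sigma> \<in> T \<Longrightarrow> take L \<sigma> \<in> T"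
  unfolding is_tree_def by (meson take_is_prefix)

lemma is_tree_JT:
  assumes "is_tree T"
  shows "is_tree (JT T)"
  unfolding is_tree_def
proof (intro ballI allI impI)
  fix \<rho> \<rho>' assume "\<rho> \<in> JT T" "prefix \<rho>' \<rho>"
  then obtain \<sigma> where \<sigma>: "\<sigma> \<in> T" "\<rho> = Jump \<sigma>" unfolding JT_def by blast
  have \<rho>': "\<rho>' = take (length \<rho>') (Jump \<sigma>)"
    using \<open>prefix \<rho>' \<rho>\<close> \<sigma>(2) by (auto simp: prefix_def)
  have len: "length \<rho>' \<le> Jk \<sigma>" using prefix_length_le[OF \<open>prefix \<rho>' \<rho>\<close>] \<sigma>(2) by simp
  show "\<rho>' \<in> JT T"
  proof (cases "length \<rho>'")
    case 0
    then have "\<rho>' = Jump (take 0 \<sigma>)" by (simp add: Jump_Nil)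
    then show ?thesis unfolding JT_def using is_tree_take[OF assms \<sigma>(1)] by blast
  next
    case (Suc i)
    then have "\<rho>' = Jump (take (jt \<sigma> i) \<sigma>)" using \<rho>' Jump_take_jt[of i \<sigma>] len by simp
    then show ?thesis unfolding JT_def using is_tree_take[OF assms \<sigma>(1)] by blast
  qed
qed

section \<open>Deciding the jump tree relative to the tree\<close>

lemma mem_JT_iff_last:
  assumes "is_tree T" and "\<rho> \<noteq> []"
  shows "\<rho> \<in> JT T \<longleftrightarrow> rev (list_decode (last \<rho>)) \<in> T \<and> Jump (rev (list_decode (last \<rho>))) = \<rho>"
proof
  assume "\<rho> \<in> JT T"
  then obtain \<sigma> where \<sigma>: "\<sigma> \<in> T" "\<rho> = Jump \<sigma>" unfolding JT_def by blast
  define i where "i = Jk \<sigma> - 1"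
  have "Jk \<sigma> \<noteq> 0" using assms(2) by (simp add: \<sigma>(2) Jump_def)
  then have i: "i < Jk \<sigma>" by (simp add: i_def)
  have "last \<rho> = scode (take (jt \<sigma> i) \<sigma>)"
    using i unfolding \<sigma>(2) Jump_def i_def by (simp add: last_map)
  then have "rev (list_decode (last \<rho>)) = take (jt \<sigma> i) \<sigma>" by (simp add: scode_def)
  moreover have "Jump (take (jt \<sigma> i) \<sigma>) = \<rho>"
    using Jump_take_jt[OF i] i \<sigma>(2) by (simp add: i_def)
  ultimately show "rev (list_decode (last \<rho>)) \<in> T \<and> Jump (rev (list_decode (last \<rho>))) = \<rho>"
    using is_tree_take[OF assms(1) \<sigma>(1)] by simp
next
  assume "rev (list_decode (last \<rho>)) \<in> T \<and> Jump (rev (list_decode (last \<rho>))) = \<rho>"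
  then show "\<rho> \<in> JT T" unfolding JT_def by (metis image_eqI)
qed

lemma mem_scode_image: "x \<in> scode ` S \<longleftrightarrow> rev (list_decode x) \<in> S"
proof
  assume "x \<in> scode ` S"
  then obtain s where "s \<in> S" "x = scode s" by blast
  then show "rev (list_decode x) \<in> S" by (simp add: scode_def)
next
  assume "rev (list_decode x) \<in> S"
  moreover have "x = scode (rev (list_decode x))" by (simp add: scode_def)
  ultimately show "x \<in> scode ` S" by blast
qed

lemma mem_scode_JT_iff:
  assumes "is_tree T"
  shows "x \<in> scode ` JT T \<longleftrightarrow>
    (x = 0 \<and> 0 \<in> scode ` T) \<or> (x \<noteq> 0 \<and> hd_code x \<in> scode ` T \<and> Jump_code (hd_code x) = x)"
proof (cases "x = 0")
  case True
  have "[] \<in> JT T \<longleftrightarrow> [] \<in> T"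
  proof
    assume "[] \<in> JT T"
    then obtain \<sigma> where "\<sigma> \<in> T" unfolding JT_def by blast
    then show "[] \<in> T" using is_tree_take[OF assms, of \<sigma> 0] by simp
  next
    assume "[] \<in> T"
    then show "[] \<in> JT T" unfolding JT_def using Jump_Nil by (metis image_eqI)
  qed
  with True show ?thesis by (simp add: mem_scode_image)
next
  case False
  let ?\<rho> = "rev (list_decode x)"
  obtain a l where al: "list_decode x = a # l"
    using False by (cases "list_decode x") (auto dest: arg_cong[where f=list_encode])
  then have "hd_code x = a" by (metis hd_code_Suc list_decode_inverse list_encode.simps(2))
  then have last: "last ?\<rho> = hd_code x" using al by simp
  have "x \<in> scode ` JT T \<longleftrightarrow> ?\<rho> \<in> JT T" by (rule mem_scode_image)
  also have "\<dots> \<longleftrightarrow> rev (list_decode (hd_code x)) \<in> T \<and> Jump (rev (list_decode (hd_code x))) = ?\<rho>"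
    using mem_JT_iff_last[OF assms, of ?\<rho>] al last by simp
  also have "\<dots> \<longleftrightarrow> hd_code x \<in> scode ` T \<and> Jump_code (hd_code x) = x"
    unfolding mem_scode_image Jump_code_eq scode_def
    by (metis list_decode_inverse list_encode_inverse rev_rev_ident)
  finally show ?thesis using False by simp
qed

lemma decidable_JT:
  assumes "is_tree T"
  shows "decidable (char_orc (scode ` T)) (\<lambda>x. x \<in> scode ` JT T)"
  unfolding mem_scode_JT_iff[OF assms]
  by (intro computable_intros decidable_char_orc)

theorem lemma4p8:
  fixes T :: "nat list set"
  assumes "is_tree T"
  shows "is_tree (JT T) \<and> computable_in (scode ` JT T) (scode ` T)"
  using is_tree_JT[OF assms] computable_in_if_decidable[OF decidable_JT[OF assms]] by blast

end
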